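(* Let $N$ be the length of the maximal strictly decreasing sequence in $(\Lambda(n;r),\triangleright)$. Then for every $\lambda\in\Lambda(n;r)$, $B^+_k(R_\lambda)=0$ for $k>N$.
   Context: $R$ commutative ring with identity, $n,r$ positive integers. $\Lambda(n;r)$: compositions in $\mathbb{N}_0^n$ with sum $r$; $\nu\triangleright\mu$ means $\nu\ne\mu$ and $\sum_{s\le t}\nu_s\ge\sum_{s\le t}\mu_s$ for all $t$. $\Lambda(n,n;r)$: $n\times n$ nonnegative integer matrices with sum $r$. $S_R(n,r)=\mathrm{End}_{R\Sigma_r}((R^n)^{\otimes r})$ ($\Sigma_r$ permuting tensor positions) has basis $\xi_\omega=\sum_{(i,j)\in\omega}e_{i,j}$, where $e_{i,j}e_k=\delta_{jk}e_i$ on the basis $e_k$ ($k\in\{1,\dots,n\}^r$) and $(i,j)\in\omega$ means $\#\{q:i_q=s,j_q=t\}=\omega_{st}$ for all $s,t$; $\xi_\lambda=\xi_{\mathrm{diag}(\lambda)}$. $\Lambda^s(n,n;r)$: upper triangular $\omega$ with $\sum_{k\le l}(l-k)\omega_{kl}\ge s$. $S^+_R(n,r)$ = span of $\xi_\omega$, $\omega\in\Lambda^0(n,n;r)$; $J_R$ = span of $\xi_\omega$, $\omega\in\Lambda^1(n,n;r)$; $L_{n,r}=\bigoplus_{\lambda\in\Lambda(n;r)}R\xi_\lambda$. $R_\lambda$: the $S^+_R(n,r)$-module $R$ with $\xi_\lambda$ acting as $1$, $\xi_\mu$ ($\mu\neq\lambda$) and $J_R$ acting as $0$. For $k\ge0$,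 $B^+_k(R_\lambda)=S^+_R(n,r)\otimes J_R\otimes\cdots\otimes J_R\otimes R_\lambda$ with $k$ copies of $J_R$, all tensor products over $L_{n,r}$. *)

theory Defs
  imports Main
begin

definition compositions :: "nat \<Rightarrow> nat \<Rightarrow> (nat \<Rightarrow> nat) set" where
  "compositions n r = {la. (\<forall>s. s \<notin> {1..n} \<longrightarrow> la s = 0) \<and> (\<Sum>s=1..n. la s) = r}"

definition dom_gt :: "nat \<Rightarrow> (nat \<Rightarrow> nat) \<Rightarrow> (nat \<Rightarrow> nat) \<Rightarrow> bool" where
  "dom_gt n nu mu \<longleftrightarrow> nu \<noteq> mu \<and> (\<forall>t\<in>{1..n}. (\<Sum>s=1..t. mu s) \<le> (\<Sum>s=1..t. nu s))"

text \<open>Length (number of strict steps) of a maximal strictly decreasing sequence in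
  (Lambda(n;r), |>): the largest k admitting c 0 |> c 1 |> ... |> c k.\<close>
definition max_chain_length :: "nat \<Rightarrow> nat \<Rightarrow> nat" where
  "max_chain_length n r = Max {k. \<exists>c. (\<forall>i\<le>k. c i \<in> compositions n r) \<and>
                                       (\<forall>i<k. dom_gt n (c i) (c (Suc i)))}"

definition matrices :: "nat \<Rightarrow> nat \<Rightarrow> (nat \<Rightarrow> nat \<Rightarrow> nat) set" where
  "matrices n r = {w. (\<forall>s t. (s \<notin> {1..n} \<or> t \<notin> {1..n}) \<longrightarrow> w s t = 0) \<and>
                      (\<Sum>s=1..n. \<Sum>t=1..n. w s t) = r}"

definition diag_mat :: "(nat \<Rightarrow> nat) \<Rightarrow> nat \<Rightarrow> nat \<Rightarrow> nat" where
  "diag_mat la = (\<lambda>s t. if s = t then la s else 0)"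

definition Lambda_s :: "nat \<Rightarrow> nat \<Rightarrow> nat \<Rightarrow> (nat \<Rightarrow> nat \<Rightarrow> nat) set" where
  "Lambda_s n r s0 = {w \<in> matrices n r. (\<forall>k l. l < k \<longrightarrow> w k l = 0) \<and>
        s0 \<le> (\<Sum>k=1..n. \<Sum>l=k..n. (l - k) * w k l)}"

text \<open>Multi-indices {1..n}^r, indexing the basis e_i of (R^n)^{\<otimes> r}.\<close>
definition multi_indices :: "nat \<Rightarrow> nat \<Rightarrow> nat list set" where
  "multi_indices n r = {i. length i = r \<and> set i \<subseteq> {1..n}}"

text \<open>Endomorphisms of (R^n)^{\<otimes> r} as matrices w.r.t. the basis e_i: f(e_j) = sum_i A i j e_i.\<close>
type_synonym 'a tmat = "nat list \<Rightarrow> nat list \<Rightarrow> 'a"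

definition in_orbit :: "nat \<Rightarrow> nat \<Rightarrow> (nat \<Rightarrow> nat \<Rightarrow> nat) \<Rightarrow> nat list \<Rightarrow> nat list \<Rightarrow> bool" where
  "in_orbit n r w i j \<longleftrightarrow> i \<in> multi_indices n r \<and> j \<in> multi_indices n r \<and>
     (\<forall>s\<in>{1..n}. \<forall>t\<in>{1..n}. w s t = card {q. q < r \<and> i ! q = s \<and> j ! q = t})"

definition xi :: "nat \<Rightarrow> nat \<Rightarrow> (nat \<Rightarrow> nat \<Rightarrow> nat) \<Rightarrow> 'a::comm_ring_1 tmat" where
  "xi n r w = (\<lambda>i j. if in_orbit n r w i j then 1 else 0)"

text \<open>Composition of endomorphisms = matrix product.\<close>
definition mmul :: "nat \<Rightarrow> nat \<Rightarrow> 'a::comm_ring_1 tmat \<Rightarrow> 'a tmat \<Rightarrow> 'a tmat" where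
  "mmul n r A B = (\<lambda>i k. \<Sum>j\<in>multi_indices n r. A i j * B j k)"

definition xi_span :: "nat \<Rightarrow> nat \<Rightarrow> (nat \<Rightarrow> nat \<Rightarrow> nat) set \<Rightarrow> 'a::comm_ring_1 tmat set" where
  "xi_span n r W = {(\<lambda>i j. \<Sum>w\<in>W. c w * xi n r w i j) | c. True}"

definition Splus :: "nat \<Rightarrow> nat \<Rightarrow> 'a::comm_ring_1 tmat set" where
  "Splus n r = xi_span n r (Lambda_s n r 0)"

definition Jideal :: "nat \<Rightarrow> nat \<Rightarrow> 'a::comm_ring_1 tmat set" where
  "Jideal n r = xi_span n r (Lambda_s n r 1)"

definition factor :: "nat \<Rightarrow> nat \<Rightarrow> nat \<Rightarrow> 'a::comm_ring_1 tmat set" where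
  "factor n r p = (if p = 0 then Splus n r else Jideal n r)"

text \<open>Pure tuples (m_0,...,m_k, x) with m_0 in S^+, m_1..m_k in J, x in R_la = R.\<close>
definition valid_tuple :: "nat \<Rightarrow> nat \<Rightarrow> nat \<Rightarrow> 'a::comm_ring_1 tmat list \<times> 'a \<Rightarrow> bool" where
  "valid_tuple n r k t \<longleftrightarrow> length (fst t) = Suc k \<and> (\<forall>p\<le>k. fst t ! p \<in> factor n r p)"

definition delta :: "'b \<Rightarrow> 'b \<Rightarrow> int" where
  "delta t = (\<lambda>u. if u = t then 1 else 0)"

definition fdiff :: "('b \<Rightarrow> int) \<Rightarrow> ('b \<Rightarrow> int) \<Rightarrow> 'b \<Rightarrow> int" where
  "fdiff f g = (\<lambda>u. f u - g u)"

inductive_set gen_subgroup :: "('b \<Rightarrow> int) set \<Rightarrow> ('b \<Rightarrow> int) set" for G where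
  gen_zero: "(\<lambda>_. 0) \<in> gen_subgroup G"
| gen_base: "g \<in> G \<Longrightarrow> g \<in> gen_subgroup G"
| gen_diff: "a \<in> gen_subgroup G \<Longrightarrow> b \<in> gen_subgroup G \<Longrightarrow> fdiff a b \<in> gen_subgroup G"

text \<open>Action of the generators c*xi_mu (c in R, mu in Lambda(n;r)) of L_{n,r} on R_la.\<close>
definition act_R :: "(nat \<Rightarrow> nat) \<Rightarrow> (nat \<Rightarrow> nat) \<Rightarrow> 'a::comm_ring_1 \<Rightarrow> 'a \<Rightarrow> 'a" where
  "act_R la mu c x = (if mu = la then c * x else 0)"

definition scal_xi :: "nat \<Rightarrow> nat \<Rightarrow> 'a::comm_ring_1 \<Rightarrow> (nat \<Rightarrow> nat) \<Rightarrow> 'a tmat" where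
  "scal_xi n r c mu = (\<lambda>i j. c * xi n r (diag_mat mu) i j)"

text \<open>Defining relations of the tensor product over L_{n,r}: additivity in every factor and
  L-balancedness (it suffices to take l ranging over the additive generators c*xi_mu of L).\<close>
definition tensor_relations ::
  "nat \<Rightarrow> nat \<Rightarrow> nat \<Rightarrow> (nat \<Rightarrow> nat) \<Rightarrow> (('a::comm_ring_1 tmat list \<times> 'a) \<Rightarrow> int) set" where
  "tensor_relations n r k la =
     {fdiff (fdiff (delta (ms[p := (\<lambda>i j. a i j + b i j)], x)) (delta (ms[p := a], x))) (delta (ms[p := b], x))
        | ms x p a b. valid_tuple n r k (ms, x) \<and> p \<le> k \<and> a \<in> factor n r p \<and> b \<in> factor n r p}
   \<union> {fdiff (fdiff (delta (ms, x + y)) (delta (ms, x))) (delta (ms, y))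
        | ms x y. valid_tuple n r k (ms, x)}
   \<union> {fdiff (delta (ms[p := mmul n r (ms ! p) (scal_xi n r c mu)], x))
             (delta (ms[Suc p := mmul n r (scal_xi n r c mu) (ms ! Suc p)], x))
        | ms x p c mu. valid_tuple n r k (ms, x) \<and> p < k \<and> mu \<in> compositions n r}
   \<union> {fdiff (delta (ms[k := mmul n r (ms ! k) (scal_xi n r c mu)], x))
             (delta (ms, act_R la mu c x))
        | ms x c mu. valid_tuple n r k (ms, x) \<and> mu \<in> compositions n r}"

text \<open>B^+_k(R_la) = S^+ (x)_L J (x)_L ... (x)_L J (x)_L R_la (k copies of J), constructed as the
  free abelian group on pure tuples modulo the tensor relations; its carrier is the set of cosets.\<close>
definition Bplus :: "nat \<Rightarrow> nat \<Rightarrow> nat \<Rightarrow> (nat \<Rightarrow> nat) \<Rightarrow>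
     (('a::comm_ring_1 tmat list \<times> 'a) \<Rightarrow> int) set set" where
  "Bplus n r k la =
     (\<lambda>g. {h. fdiff h g \<in> gen_subgroup (tensor_relations n r k la)})
       ` gen_subgroup {delta t | t. valid_tuple n r k t}"

definition Bplus_zero :: "'a::comm_ring_1 itself \<Rightarrow> nat \<Rightarrow> nat \<Rightarrow> nat \<Rightarrow> (nat \<Rightarrow> nat) \<Rightarrow> bool" where
  "Bplus_zero _ n r k la \<longleftrightarrow>
     (Bplus n r k la :: (('a tmat list \<times> 'a) \<Rightarrow> int) set set) = {gen_subgroup (tensor_relations n r k la)}"

end

theory Submission
  imports Defs
begin

text \<open>\<open>B\<^sup>+\<^sub>k(R\<^sub>\<lambda>)\<close> is generated by pure tensors \<open>m\<^sub>0 \<otimes> \<dots> \<otimes> m\<^sub>k \<otimes> x\<close>. Splitting \<open>m\<^sub>0\<close> by the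
  weight of its columns we may assume \<open>m\<^sub>0 = m\<^sub>0 \<xi>\<^sub>\<mu>\<^sub>0\<close>. Balancedness moves \<open>\<xi>\<^sub>\<mu>\<^sub>0\<close> into
  \<open>m\<^sub>1\<close>, which then only has rows of weight \<open>\<mu>\<^sub>0\<close>; since \<open>m\<^sub>1 \<in> J\<close> is spanned by strictly upper
  triangular orbits, splitting \<open>m\<^sub>1\<close> by column weight only produces weights \<open>\<mu>\<^sub>1\<close> with
  \<open>\<mu>\<^sub>0 \<rhd> \<mu>\<^sub>1\<close>. Iterating up to \<open>m\<^sub>k\<close> yields a chain \<open>\<mu>\<^sub>0 \<rhd> \<dots> \<rhd> \<mu>\<^sub>k\<close>, and finally
  \<open>\<xi>\<^sub>\<mu>\<^sub>k\<close> acts on \<open>R\<^sub>\<lambda>\<close> by zero unless \<open>\<mu>\<^sub>k = \<lambda>\<close>. For \<open>k > N\<close> no such chain exists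
  (whatever its endpoint), so every pure tensor vanishes.\<close>

section \<open>Weights of multi-indices\<close>

definition weight :: "nat \<Rightarrow> nat list \<Rightarrow> nat \<Rightarrow> nat" where
  "weight r i s = card {q. q < r \<and> i ! q = s}"

lemma finite_multi_indices: "finite (multi_indices n r)"
proof -
  have "multi_indices n r = {i. set i \<subseteq> {1..n} \<and> length i = r}"
    unfolding multi_indices_def by auto
  then show ?thesis using finite_lists_length_eq[of "{1..n}" r] by simp
qed

lemma multi_indices_nth: "i \<in> multi_indices n r \<Longrightarrow> q < r \<Longrightarrow> i ! q \<in> {1..n}"
  unfolding multi_indices_def by (auto intro!: nth_mem)

lemma card_partition_by:
  fixes r :: nat
  assumes "finite A" and "\<forall>q<r. f q \<in> A"
  shows "card {q. q < r \<and> P q} = (\<Sum>t\<in>A. card {q. q < r \<and> P q \<and> f q = t})"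
proof -
  have "{q. q < r \<and> P q} = (\<Union>t\<in>A. {q. q < r \<and> P q \<and> f q = t})" using assms(2) by auto
  also have "card \<dots> = (\<Sum>t\<in>A. card {q. q < r \<and> P q \<and> f q = t})"
    by (rule card_UN_disjoint) (auto simp: assms(1))
  finally show ?thesis .
qed

lemma sum_weight:
  assumes "finite A"
  shows "(\<Sum>s\<in>A. weight r i s) = card {q. q < r \<and> i ! q \<in> A}"
proof -
  have "{q. q < r \<and> i ! q \<in> A} = (\<Union>s\<in>A. {q. q < r \<and> i ! q = s})" by auto
  also have "card \<dots> = (\<Sum>s\<in>A. card {q. q < r \<and> i ! q = s})"
    by (rule card_UN_disjoint) (auto simp: assms)
  finally show ?thesis unfolding weight_def ..
qed

lemma weight_outside: "i \<in> multi_indices n r \<Longrightarrow> s \<notin> {1..n} \<Longrightarrow> weight r i s = 0"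
  unfolding weight_def using multi_indices_nth[of i n r] by fastforce

lemma weight_in_compositions: "i \<in> multi_indices n r \<Longrightarrow> weight r i \<in> compositions n r"
proof -
  assume i: "i \<in> multi_indices n r"
  have "(\<Sum>s=1..n. weight r i s) = card {q. q < r \<and> i ! q \<in> {1..n}}" by (simp add: sum_weight)
  also have "{q. q < r \<and> i ! q \<in> {1..n}} = {..<r}" using multi_indices_nth[OF i] by auto
  finally show ?thesis unfolding compositions_def using weight_outside[OF i] by auto
qed

lemma partial_sum_weight:
  "i \<in> multi_indices n r \<Longrightarrow> (\<Sum>s=1..t. weight r i s) = card {q. q < r \<and> i ! q \<le> t}"
  using multi_indices_nth[of i n r] by (simp add: sum_weight) metis

section \<open>Orbits and spans of basis elements\<close>

lemma in_orbit_multi_indices: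
  "in_orbit n r w i j \<Longrightarrow> i \<in> multi_indices n r \<and> j \<in> multi_indices n r"
  unfolding in_orbit_def by simp

lemma in_orbit_entry_pos:
  assumes o: "in_orbit n r w i j" and q: "q < r"
  shows "w (i ! q) (j ! q) > 0"
proof -
  have "w (i ! q) (j ! q) = card {q'. q' < r \<and> i ! q' = i ! q \<and> j ! q' = j ! q}"
    using o multi_indices_nth[OF _ q] unfolding in_orbit_def by blast
  also have "\<dots> > 0" using q by (subst card_gt_0_iff) auto
  finally show ?thesis .
qed

lemma in_orbit_diag_iff:
  assumes mu: "mu \<in> compositions n r"
  shows "in_orbit n r (diag_mat mu) i j \<longleftrightarrow> i \<in> multi_indices n r \<and> j = i \<and> weight r i = mu"
proof
  assume o: "in_orbit n r (diag_mat mu) i j"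
  have i: "i \<in> multi_indices n r" and j: "j \<in> multi_indices n r"
    using in_orbit_multi_indices[OF o] by auto
  have "j ! q = i ! q" if "q < r" for q
    using in_orbit_entry_pos[OF o that] unfolding diag_mat_def by (auto split: if_splits)
  with i j have ji: "j = i" unfolding multi_indices_def by (auto intro: nth_equalityI)
  have "weight r i s = mu s" for s
  proof (cases "s \<in> {1..n}")
    case True
    then have "diag_mat mu s s = card {q. q < r \<and> i ! q = s \<and> j ! q = s}"
      using o unfolding in_orbit_def by blast
    then show ?thesis using ji unfolding diag_mat_def weight_def by simp
  next
    case False
    then show ?thesis using weight_outside[OF i] mu unfolding compositions_def by auto
  qed
  with i ji show "i \<in> multi_indices n r \<and> j = i \<and> weight r i = mu" by auto
next
  assume "i \<in> multi_indices n r \<and> j = i \<and> weight r i = mu"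
  then show "in_orbit n r (diag_mat mu) i j"
    unfolding in_orbit_def by (auto simp: diag_mat_def weight_def)
qed

lemma mmul_scal_xi_right:
  assumes "mu \<in> compositions n r"
  shows "mmul n r A (scal_xi n r 1 mu) i k =
    (if k \<in> multi_indices n r \<and> weight r k = mu then A i k else 0)"
proof -
  have e: "(\<lambda>j. A i j * scal_xi n r 1 mu j k)
      = (\<lambda>j. if j = k then (if k \<in> multi_indices n r \<and> weight r k = mu then A i k else 0) else 0)"
    using assms by (auto simp: scal_xi_def xi_def in_orbit_diag_iff)
  show ?thesis unfolding mmul_def e by (simp add: finite_multi_indices)
qed

lemma mmul_scal_xi_left:
  assumes "mu \<in> compositions n r"
  shows "mmul n r (scal_xi n r 1 mu) B i k =
    (if i \<in> multi_indices n r \<and> weight r i = mu then B i k else 0)"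
proof -
  have e: "(\<lambda>j. scal_xi n r 1 mu i j * B j k)
      = (\<lambda>j. if j = i then (if i \<in> multi_indices n r \<and> weight r i = mu then B i k else 0) else 0)"
    using assms by (auto simp: scal_xi_def xi_def in_orbit_diag_iff)
  show ?thesis unfolding mmul_def e by (simp add: finite_multi_indices)
qed

definition row_sums :: "nat \<Rightarrow> (nat \<Rightarrow> nat \<Rightarrow> nat) \<Rightarrow> nat \<Rightarrow> nat" where
  "row_sums n w s = (if s \<in> {1..n} then \<Sum>t=1..n. w s t else 0)"

definition col_sums :: "nat \<Rightarrow> (nat \<Rightarrow> nat \<Rightarrow> nat) \<Rightarrow> nat \<Rightarrow> nat" where
  "col_sums n w t = (if t \<in> {1..n} then \<Sum>s=1..n. w s t else 0)"

lemma in_orbit_weight_row_sums: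
  assumes o: "in_orbit n r w i j"
  shows "weight r i = row_sums n w"
proof
  fix s
  have i: "i \<in> multi_indices n r" and j: "j \<in> multi_indices n r"
    using in_orbit_multi_indices[OF o] by auto
  show "weight r i s = row_sums n w s"
  proof (cases "s \<in> {1..n}")
    case True
    have "weight r i s = (\<Sum>t\<in>{1..n}. card {q. q < r \<and> i ! q = s \<and> j ! q = t})"
      unfolding weight_def by (rule card_partition_by) (use multi_indices_nth[OF j] in auto)
    also have "\<dots> = (\<Sum>t\<in>{1..n}. w s t)"
      using o True by (auto simp: in_orbit_def)
    finally show ?thesis using True unfolding row_sums_def by simp
  next
    case False
    then show ?thesis unfolding row_sums_def by (simp only: if_False weight_outside[OF i False])
  qed
qed

lemma in_orbit_weight_col_sums:
  assumes o: "in_orbit n r w i j"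
  shows "weight r j = col_sums n w"
proof
  fix t
  have i: "i \<in> multi_indices n r" and j: "j \<in> multi_indices n r"
    using in_orbit_multi_indices[OF o] by auto
  show "weight r j t = col_sums n w t"
  proof (cases "t \<in> {1..n}")
    case True
    have "weight r j t = (\<Sum>s\<in>{1..n}. card {q. q < r \<and> j ! q = t \<and> i ! q = s})"
      unfolding weight_def by (rule card_partition_by) (use multi_indices_nth[OF i] in auto)
    also have "\<dots> = (\<Sum>s\<in>{1..n}. w s t)"
      using o True by (auto simp: in_orbit_def conj_commute intro!: sum.cong)
    finally show ?thesis using True unfolding col_sums_def by simp
  next
    case False
    then show ?thesis unfolding col_sums_def by (simp only: if_False weight_outside[OF j False])
  qed
qed

lemma xi_span_nonzero_entry:
  assumes "m \<in> xi_span n r W" and "m i j \<noteq> (0::'a::comm_ring_1)"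
  obtains w where "w \<in> W" and "in_orbit n r w i j"
proof -
  obtain c where "m = (\<lambda>i j. \<Sum>w\<in>W. c w * (xi n r w i j :: 'a))"
    using assms(1) unfolding xi_span_def by auto
  with assms(2) obtain w where "w \<in> W" and "c w * (xi n r w i j :: 'a) \<noteq> 0"
    by (meson sum.neutral)
  with that show ?thesis unfolding xi_def by (auto split: if_splits)
qed

lemma xi_span_nonzero_multi_indices:
  assumes "m \<in> xi_span n r W" and "m i j \<noteq> (0::'a::comm_ring_1)"
  shows "i \<in> multi_indices n r" and "j \<in> multi_indices n r"
  by (metis xi_span_nonzero_entry[OF assms] in_orbit_multi_indices)+

lemma xi_span_zero: "(\<lambda>i j. 0::'a::comm_ring_1) \<in> xi_span n r W"
  unfolding xi_span_def by (intro CollectI exI[of _ "\<lambda>_. 0"]) simp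

lemma xi_span_add:
  assumes "a \<in> xi_span n r W" and "b \<in> xi_span n r W"
  shows "(\<lambda>i j. a i j + b i j :: 'a::comm_ring_1) \<in> xi_span n r W"
proof -
  obtain c where a: "a = (\<lambda>i j. \<Sum>w\<in>W. c w * (xi n r w i j :: 'a))"
    using assms(1) unfolding xi_span_def by auto
  obtain d where b: "b = (\<lambda>i j. \<Sum>w\<in>W. d w * (xi n r w i j :: 'a))"
    using assms(2) unfolding xi_span_def by auto
  have "(\<lambda>i j. a i j + b i j) = (\<lambda>i j. \<Sum>w\<in>W. (c w + d w) * (xi n r w i j :: 'a))"
    unfolding a b by (simp add: distrib_right sum.distrib)
  then show ?thesis unfolding xi_span_def by (intro CollectI exI[of _ "\<lambda>w. c w + d w"]) simp
qed

lemma xi_span_sum: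
  assumes "finite V" and "\<And>v. v \<in> V \<Longrightarrow> f v \<in> xi_span n r W"
  shows "(\<lambda>i j. \<Sum>v\<in>V. f v i j :: 'a::comm_ring_1) \<in> xi_span n r W"
  using assms by (induction V rule: finite_induct) (simp_all add: xi_span_zero xi_span_add)

text \<open>Each \<open>\<xi>\<^sub>\<omega>\<close> is supported on index pairs of row weight \<open>row_sums n \<omega>\<close> and column weight
  \<open>col_sums n \<omega>\<close>, so restricting to a set of weight pairs just drops some coefficients.\<close>
lemma xi_span_restrict_weights:
  assumes "m \<in> xi_span n r W"
  shows "(\<lambda>i j. if P (weight r i) (weight r j) then m i j else (0::'a::comm_ring_1)) \<in> xi_span n r W"
proof -
  obtain c where m: "m = (\<lambda>i j. \<Sum>w\<in>W. c w * (xi n r w i j :: 'a))"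
    using assms unfolding xi_span_def by auto
  define c' where "c' w = (if P (row_sums n w) (col_sums n w) then c w else 0)" for w
  have "c' w * xi n r w i j = (if P (weight r i) (weight r j) then c w * xi n r w i j else 0)" for w i j
    by (cases "in_orbit n r w i j")
      (simp_all add: c'_def xi_def in_orbit_weight_row_sums in_orbit_weight_col_sums)
  then have "(\<lambda>i j. if P (weight r i) (weight r j) then m i j else 0)
      = (\<lambda>i j. \<Sum>w\<in>W. c' w * (xi n r w i j :: 'a))"
    unfolding m by (intro ext) simp
  then show ?thesis unfolding xi_span_def by (intro CollectI exI[of _ c']) simp
qed

lemma Lambda_s_1_strict_entry:
  assumes "w \<in> Lambda_s n r 1"
  obtains k l where "k < l" and "k \<in> {1..n}" and "l \<in> {1..n}" and "w k l \<noteq> 0"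
proof -
  have "1 \<le> (\<Sum>k=1..n. \<Sum>l=k..n. (l - k) * w k l)"
    using assms unfolding Lambda_s_def by blast
  then have "(\<Sum>k=1..n. \<Sum>l=k..n. (l - k) * w k l) \<noteq> 0" by linarith
  then obtain k where "k \<in> {1..n}" and "(\<Sum>l=k..n. (l - k) * w k l) \<noteq> 0"
    by (meson sum.neutral)
  moreover from this(2) obtain l where "l \<in> {k..n}" and "(l - k) * w k l \<noteq> 0"
    by (meson sum.neutral)
  ultimately show ?thesis using that[of k l] by auto
qed

text \<open>An index pair in the orbit of an upper triangular \<open>\<omega>\<close> satisfies \<open>i ! q \<le> j ! q\<close> for all \<open>q\<close>,
  with strict inequality somewhere when \<open>\<omega>\<close> is not diagonal; passing to weights, this is dominance.\<close>
lemma in_orbit_dom_gt: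
  assumes w: "w \<in> Lambda_s n r 1" and o: "in_orbit n r w i j"
  shows "dom_gt n (weight r i) (weight r j)"
proof -
  have i: "i \<in> multi_indices n r" and j: "j \<in> multi_indices n r"
    using in_orbit_multi_indices[OF o] by auto
  have lower: "\<forall>k l. l < k \<longrightarrow> w k l = 0" using w unfolding Lambda_s_def by blast
  have "i ! q \<le> j ! q" if "q < r" for q
    using in_orbit_entry_pos[OF o that] lower by (metis not_le less_irrefl)
  then have sub: "{q. q < r \<and> j ! q \<le> t} \<subseteq> {q. q < r \<and> i ! q \<le> t}" for t
    using le_trans by blast
  have partial_le: "(\<Sum>s=1..t. weight r j s) \<le> (\<Sum>s=1..t. weight r i s)" for t
    unfolding partial_sum_weight[OF i] partial_sum_weight[OF j] by (rule card_mono) (simp_all add: sub)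
  obtain k l where kl: "k < l" "k \<in> {1..n}" "l \<in> {1..n}" "w k l \<noteq> 0"
    using Lambda_s_1_strict_entry[OF w] .
  have "w k l = card {q. q < r \<and> i ! q = k \<and> j ! q = l}"
    using o kl(2,3) unfolding in_orbit_def by blast
  with kl(4) have "{q. q < r \<and> i ! q = k \<and> j ! q = l} \<noteq> {}" by force
  then obtain q where q: "q < r" "i ! q = k" "j ! q = l" by blast
  with kl(1) have "q \<in> {q. q < r \<and> i ! q \<le> k}" and "q \<notin> {q. q < r \<and> j ! q \<le> k}" by auto
  with sub[of k] have "{q. q < r \<and> j ! q \<le> k} \<subset> {q. q < r \<and> i ! q \<le> k}" by blast
  then have "card {q. q < r \<and> j ! q \<le> k} < card {q. q < r \<and> i ! q \<le> k}"
    by (rule psubset_card_mono[rotated]) simp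
  then have "weight r i \<noteq> weight r j"
    unfolding partial_sum_weight[OF i, symmetric] partial_sum_weight[OF j, symmetric] by (metis less_irrefl)
  with partial_le show ?thesis unfolding dom_gt_def by auto
qed

lemma Jideal_entry_dom_gt:
  assumes "m \<in> Jideal n r" and "m i j \<noteq> (0::'a::comm_ring_1)"
  shows "dom_gt n (weight r i) (weight r j)"
  using assms xi_span_nonzero_entry in_orbit_dom_gt unfolding Jideal_def by metis

definition col_restrict :: "nat \<Rightarrow> (nat \<Rightarrow> nat) \<Rightarrow> 'a::zero tmat \<Rightarrow> 'a tmat" where
  "col_restrict r nu m = (\<lambda>i j. if weight r j = nu then m i j else 0)"

definition row_restrict :: "nat \<Rightarrow> (nat \<Rightarrow> nat) \<Rightarrow> 'a::zero tmat \<Rightarrow> 'a tmat" where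
  "row_restrict r mu m = (\<lambda>i j. if weight r i = mu then m i j else 0)"

definition columns_of_weight :: "nat \<Rightarrow> 'a::zero tmat \<Rightarrow> (nat \<Rightarrow> nat) \<Rightarrow> bool" where
  "columns_of_weight r m mu \<longleftrightarrow> (\<forall>i j. m i j \<noteq> 0 \<longrightarrow> weight r j = mu)"

lemma columns_of_weight_col_restrict: "columns_of_weight r (col_restrict r nu m) nu"
  unfolding columns_of_weight_def col_restrict_def by simp

lemma col_restrict_in_xi_span:
  "m \<in> xi_span n r W \<Longrightarrow> col_restrict r nu (m :: 'a::comm_ring_1 tmat) \<in> xi_span n r W"
  unfolding col_restrict_def by (rule xi_span_restrict_weights)

lemma row_restrict_in_xi_span:
  "m \<in> xi_span n r W \<Longrightarrow> row_restrict r mu (m :: 'a::comm_ring_1 tmat) \<in> xi_span n r W"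
  unfolding row_restrict_def by (rule xi_span_restrict_weights)

lemma sum_col_restrict:
  assumes "(m :: 'a::comm_ring_1 tmat) \<in> xi_span n r W"
  shows "(\<lambda>i j. \<Sum>nu\<in>weight r ` multi_indices n r. col_restrict r nu m i j) = m"
proof (intro ext)
  fix i j
  have "m i j = 0" if "j \<notin> multi_indices n r"
    using xi_span_nonzero_multi_indices(2)[OF assms] that by blast
  then show "(\<Sum>nu\<in>weight r ` multi_indices n r. col_restrict r nu m i j) = m i j"
    unfolding col_restrict_def by (auto simp: finite_multi_indices)
qed

lemma mmul_scal_xi_right_columns_of_weight:
  assumes "(m :: 'a::comm_ring_1 tmat) \<in> xi_span n r W" and "mu \<in> compositions n r"
    and "columns_of_weight r m mu"
  shows "mmul n r m (scal_xi n r 1 mu) = m"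
proof (intro ext)
  fix i j
  have "m i j = 0" if "j \<notin> multi_indices n r \<or> weight r j \<noteq> mu"
    using xi_span_nonzero_multi_indices(2)[OF assms(1)] assms(3) that
    unfolding columns_of_weight_def by blast
  then show "mmul n r m (scal_xi n r 1 mu) i j = m i j"
    unfolding mmul_scal_xi_right[OF assms(2)] by auto
qed

lemma mmul_scal_xi_left_row_restrict:
  assumes "(m :: 'a::comm_ring_1 tmat) \<in> xi_span n r W" and "mu \<in> compositions n r"
  shows "mmul n r (scal_xi n r 1 mu) m = row_restrict r mu m"
proof (intro ext)
  fix i j
  have "m i j = 0" if "i \<notin> multi_indices n r"
    using xi_span_nonzero_multi_indices(1)[OF assms(1)] that by blast
  then show "mmul n r (scal_xi n r 1 mu) m i j = row_restrict r mu m i j"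
    unfolding mmul_scal_xi_left[OF assms(2)] row_restrict_def by auto
qed

lemma col_restrict_nonzero_compositions:
  assumes "(m :: 'a::comm_ring_1 tmat) \<in> xi_span n r W" and "col_restrict r nu m \<noteq> (\<lambda>i j. 0)"
  shows "nu \<in> compositions n r"
proof -
  from assms(2) obtain i j where "col_restrict r nu m i j \<noteq> 0" by blast
  then have "m i j \<noteq> 0" and "weight r j = nu"
    unfolding col_restrict_def by (auto split: if_splits)
  with xi_span_nonzero_multi_indices(2)[OF assms(1)] show ?thesis
    using weight_in_compositions by blast
qed

lemma Jideal_restrict_nonzero_dom_gt:
  assumes "(m :: 'a::comm_ring_1 tmat) \<in> Jideal n r"
    and "col_restrict r nu (row_restrict r mu m) \<noteq> (\<lambda>i j. 0)"
  shows "dom_gt n mu nu"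
proof -
  from assms(2) obtain i j where "col_restrict r nu (row_restrict r mu m) i j \<noteq> 0" by blast
  then have "m i j \<noteq> 0" and "weight r i = mu" and "weight r j = nu"
    unfolding col_restrict_def row_restrict_def by (auto split: if_splits)
  with Jideal_entry_dom_gt[OF assms(1)] show ?thesis by metis
qed

lemma gen_subgroup_cancel:
  assumes "fdiff a b \<in> gen_subgroup G" and "b \<in> gen_subgroup G"
  shows "a \<in> gen_subgroup G"
proof -
  have "fdiff (fdiff a b) (fdiff (\<lambda>_. 0) b) \<in> gen_subgroup G"
    using gen_diff[OF assms(1) gen_diff[OF gen_zero assms(2)]] .
  moreover have "fdiff (fdiff a b) (fdiff (\<lambda>_. 0) b) = a" by (simp add: fdiff_def)
  ultimately show ?thesis by simp
qed

lemma gen_subgroup_fdiff_self: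
  assumes "fdiff (fdiff a a) a \<in> gen_subgroup G"
  shows "a \<in> gen_subgroup G"
proof -
  have "fdiff (\<lambda>_. 0) (fdiff (fdiff a a) a) \<in> gen_subgroup G"
    using gen_diff[OF gen_zero assms] .
  moreover have "fdiff (\<lambda>_. 0) (fdiff (fdiff a a) a) = a" by (simp add: fdiff_def)
  ultimately show ?thesis by simp
qed

lemma gen_subgroup_mono_generators:
  assumes "A \<subseteq> gen_subgroup G"
  shows "gen_subgroup A \<subseteq> gen_subgroup G"
proof
  fix g assume "g \<in> gen_subgroup A"
  then show "g \<in> gen_subgroup G"
    by (induction rule: gen_subgroup.induct) (use assms in \<open>auto intro: gen_zero gen_diff\<close>)
qed

lemma gen_subgroup_coset:
  assumes "g \<in> gen_subgroup G"
  shows "{h. fdiff h g \<in> gen_subgroup G} = gen_subgroup G"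
proof
  show "{h. fdiff h g \<in> gen_subgroup G} \<subseteq> gen_subgroup G"
    using gen_subgroup_cancel assms by blast
  show "gen_subgroup G \<subseteq> {h. fdiff h g \<in> gen_subgroup G}"
    using gen_diff assms by blast
qed

lemma factor_eq_xi_span: "factor n r p = xi_span n r (Lambda_s n r (if p = 0 then 0 else 1))"
  unfolding factor_def Splus_def Jideal_def by simp

lemma valid_tuple_nth: "valid_tuple n r k (ms, x) \<Longrightarrow> p \<le> k \<Longrightarrow> ms ! p \<in> factor n r p"
  unfolding valid_tuple_def by auto

lemma valid_tuple_update:
  assumes "valid_tuple n r k (ms, x)" and "p \<le> k" and "a \<in> factor n r p"
  shows "valid_tuple n r k (ms[p := a], y)"
  using assms unfolding valid_tuple_def by (auto simp: nth_list_update)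

section \<open>Strictly decreasing chains\<close>

definition dominance_potential :: "nat \<Rightarrow> (nat \<Rightarrow> nat) \<Rightarrow> nat" where
  "dominance_potential n f = (\<Sum>t=1..n. \<Sum>s=1..t. f s)"

lemma dominance_potential_le:
  assumes "f \<in> compositions n r"
  shows "dominance_potential n f \<le> n * r"
proof -
  have "(\<Sum>s=1..t. f s) \<le> r" if "t \<in> {1..n}" for t
  proof -
    have "(\<Sum>s=1..t. f s) \<le> (\<Sum>s=1..n. f s)" by (rule sum_mono2) (use that in auto)
    then show ?thesis using assms unfolding compositions_def by simp
  qed
  then have "dominance_potential n f \<le> (\<Sum>t=1..n. r)"
    unfolding dominance_potential_def by (intro sum_mono) auto
  then show ?thesis by simp
qed

lemma compositions_eqI:
  assumes "nu \<in> compositions n r" and "mu \<in> compositions n r"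
    and "\<And>t. t \<le> n \<Longrightarrow> (\<Sum>s=1..t. nu s) = (\<Sum>s=1..t. mu s)"
  shows "nu = mu"
proof
  fix s
  show "nu s = mu s"
  proof (cases "s \<in> {1..n}")
    case True
    then obtain t where t: "s = Suc t" "t < n" by (cases s) auto
    then show ?thesis using assms(3)[of t] assms(3)[of "Suc t"] by simp
  next
    case False
    then show ?thesis using assms(1,2) unfolding compositions_def by auto
  qed
qed

lemma dominance_potential_strict_mono:
  assumes d: "dom_gt n nu mu" and nu: "nu \<in> compositions n r" and mu: "mu \<in> compositions n r"
  shows "dominance_potential n mu < dominance_potential n nu"
proof -
  have le: "\<forall>t\<in>{1..n}. (\<Sum>s=1..t. mu s) \<le> (\<Sum>s=1..t. nu s)"
    using d unfolding dom_gt_def by auto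
  have "\<exists>t\<in>{1..n}. (\<Sum>s=1..t. mu s) < (\<Sum>s=1..t. nu s)"
  proof (rule ccontr)
    assume "\<not> ?thesis"
    with le have "(\<Sum>s=1..t. nu s) = (\<Sum>s=1..t. mu s)" if "t \<le> n" for t
      using that by (cases "t = 0") (auto simp: not_less intro: antisym)
    then have "nu = mu" using compositions_eqI[OF nu mu] by blast
    with d show False unfolding dom_gt_def by simp
  qed
  with le show ?thesis
    unfolding dominance_potential_def by (intro sum_strict_mono_ex1) auto
qed

lemma dom_chain_length_le:
  assumes "\<forall>i\<le>k. c i \<in> compositions n r" and "\<forall>i<k. dom_gt n (c i) (c (Suc i))"
  shows "k \<le> n * r"
proof -
  have "i + dominance_potential n (c i) \<le> dominance_potential n (c 0)" if "i \<le> k" for i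
    using that
  proof (induction i)
    case (Suc i)
    have "dominance_potential n (c (Suc i)) < dominance_potential n (c i)"
      by (rule dominance_potential_strict_mono) (use assms Suc.prems in auto)
    with Suc show ?case by simp
  qed simp
  with dominance_potential_le[of "c 0"] assms(1) show ?thesis by fastforce
qed

lemma dom_chain_length_le_max:
  assumes "\<forall>i\<le>k. c i \<in> compositions n r" and "\<forall>i<k. dom_gt n (c i) (c (Suc i))"
  shows "k \<le> max_chain_length n r"
proof -
  let ?K = "{k. \<exists>c. (\<forall>i\<le>k. c i \<in> compositions n r) \<and> (\<forall>i<k. dom_gt n (c i) (c (Suc i)))}"
  have "finite ?K"
    by (rule finite_subset[of _ "{..n * r}"]) (auto intro: dom_chain_length_le)
  moreover have "k \<in> ?K" using assms by blast
  ultimately show ?thesis unfolding max_chain_length_def by simp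
qed

definition dom_chain :: "nat \<Rightarrow> nat \<Rightarrow> nat \<Rightarrow> (nat \<Rightarrow> nat) \<Rightarrow> (nat \<Rightarrow> nat) \<Rightarrow> bool" where
  "dom_chain n r d mu la \<longleftrightarrow> (\<exists>c. c 0 = mu \<and> c d = la \<and> (\<forall>i\<le>d. c i \<in> compositions n r) \<and>
      (\<forall>i<d. dom_gt n (c i) (c (Suc i))))"

lemma dom_chain_le_max_chain_length: "dom_chain n r d mu la \<Longrightarrow> d \<le> max_chain_length n r"
  unfolding dom_chain_def using dom_chain_length_le_max by blast

lemma dom_chain_refl: "mu \<in> compositions n r \<Longrightarrow> dom_chain n r 0 mu mu"
  unfolding dom_chain_def by (intro exI[of _ "\<lambda>_. mu"]) simp

lemma dom_chain_Suc:
  assumes "dom_chain n r d nu la" and "dom_gt n mu nu" and "mu \<in> compositions n r"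
  shows "dom_chain n r (Suc d) mu la"
proof -
  obtain c where c: "c 0 = nu" "c d = la" "\<forall>i\<le>d. c i \<in> compositions n r"
      "\<forall>i<d. dom_gt n (c i) (c (Suc i))"
    using assms(1) unfolding dom_chain_def by blast
  define c' where "c' i = (if i = 0 then mu else c (i - 1))" for i
  have "\<forall>i<Suc d. dom_gt n (c' i) (c' (Suc i))"
  proof (intro allI impI)
    fix i assume "i < Suc d"
    then show "dom_gt n (c' i) (c' (Suc i))" using c assms(2) unfolding c'_def by (cases i) auto
  qed
  moreover have "c' 0 = mu" "c' (Suc d) = la" "\<forall>i\<le>Suc d. c' i \<in> compositions n r"
    using c assms(3) unfolding c'_def by auto
  ultimately show ?thesis unfolding dom_chain_def by blast
qed

section \<open>Vanishing of pure tensors\<close>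

context
  fixes n r k :: nat and la :: "nat \<Rightarrow> nat"
begin

abbreviation relations :: "('a::comm_ring_1 tmat list \<times> 'a \<Rightarrow> int) set" where
  "relations \<equiv> gen_subgroup (tensor_relations n r k la)"

lemma tensor_relation_additive:
  assumes "valid_tuple n r k (ms, x)" and "p \<le> k" and "a \<in> factor n r p" and "b \<in> factor n r p"
  shows "fdiff (fdiff (delta (ms[p := (\<lambda>i j. a i j + b i j)], x)) (delta (ms[p := a], x)))
      (delta (ms[p := b], x)) \<in> relations"
  by (rule gen_base) (use assms in \<open>unfold tensor_relations_def, blast\<close>)

lemma tensor_relation_balanced:
  assumes "valid_tuple n r k (ms, x)" and "p < k" and "mu \<in> compositions n r"
  shows "fdiff (delta (ms[p := mmul n r (ms ! p) (scal_xi n r c mu)], x))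
      (delta (ms[Suc p := mmul n r (scal_xi n r c mu) (ms ! Suc p)], x)) \<in> relations"
  by (rule gen_base) (use assms in \<open>unfold tensor_relations_def, blast\<close>)

lemma tensor_relation_action:
  assumes "valid_tuple n r k (ms, x)" and "mu \<in> compositions n r"
  shows "fdiff (delta (ms[k := mmul n r (ms ! k) (scal_xi n r c mu)], x))
      (delta (ms, act_R la mu c x)) \<in> relations"
  by (rule gen_base) (use assms in \<open>unfold tensor_relations_def, blast\<close>)

lemma delta_zero_scalar:
  assumes "valid_tuple n r k (ms, x)"
  shows "delta (ms, 0) \<in> relations"
proof -
  have "valid_tuple n r k (ms, 0)" using assms unfolding valid_tuple_def by simp
  then have "fdiff (fdiff (delta (ms, 0 + 0)) (delta (ms, 0))) (delta (ms, 0)) \<in> relations"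
    by (intro gen_base) (unfold tensor_relations_def, blast)
  then show ?thesis using gen_subgroup_fdiff_self[of "delta (ms, 0)"] by simp
qed

lemma delta_zero_factor:
  assumes "valid_tuple n r k (ms, x)" and "p \<le> k"
  shows "delta (ms[p := (\<lambda>i j. 0)], x) \<in> relations"
proof -
  have "(\<lambda>i j. 0) \<in> factor n r p" unfolding factor_eq_xi_span by (rule xi_span_zero)
  from tensor_relation_additive[OF assms this this] show ?thesis
    using gen_subgroup_fdiff_self[of "delta (ms[p := (\<lambda>i j. 0)], x)"] by simp
qed

lemma delta_sum_factor:
  assumes v: "valid_tuple n r k (ms, x)" and p: "p \<le> k" and "finite V"
    and "\<And>v. v \<in> V \<Longrightarrow> f v \<in> factor n r p"
    and "\<And>v. v \<in> V \<Longrightarrow> delta (ms[p := f v], x) \<in> relations"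
  shows "delta (ms[p := (\<lambda>i j. \<Sum>v\<in>V. f v i j)], x) \<in> relations"
  using assms(3-)
proof (induction V rule: finite_induct)
  case empty
  show ?case using delta_zero_factor[OF v p] by simp
next
  case (insert v V)
  let ?b = "\<lambda>i j. \<Sum>v\<in>V. f v i j"
  have fv: "f v \<in> factor n r p" and b: "?b \<in> factor n r p"
    using insert.prems(1) unfolding factor_eq_xi_span by (auto intro: xi_span_sum[OF insert.hyps(1)])
  have "valid_tuple n r k (ms[p := ?b], x)" by (rule valid_tuple_update[OF v p b])
  from tensor_relation_additive[OF this p fv b]
  have "fdiff (fdiff (delta (ms[p := \<lambda>i j. f v i j + ?b i j], x)) (delta (ms[p := f v], x)))
      (delta (ms[p := ?b], x)) \<in> relations" by simp
  then have "delta (ms[p := \<lambda>i j. f v i j + ?b i j], x) \<in> relations"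
    using insert.prems insert.IH by (blast intro: gen_subgroup_cancel)
  with insert.hyps show ?case by simp
qed

lemma delta_by_column_weights:
  assumes v: "valid_tuple n r k (ms, x)" and p: "p \<le> k"
    and "\<And>nu. delta (ms[p := col_restrict r nu (ms ! p)], x) \<in> relations"
  shows "delta (ms, x) \<in> relations"
proof -
  have m: "ms ! p \<in> xi_span n r (Lambda_s n r (if p = 0 then 0 else 1))"
    using valid_tuple_nth[OF v p] unfolding factor_eq_xi_span .
  have "delta (ms[p := (\<lambda>i j. \<Sum>nu\<in>weight r ` multi_indices n r. col_restrict r nu (ms ! p) i j)], x)
      \<in> relations"
    by (rule delta_sum_factor[OF v p])
      (use assms(3) m in \<open>simp_all add: finite_multi_indices col_restrict_in_xi_span factor_eq_xi_span\<close>)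
  then show ?thesis unfolding sum_col_restrict[OF m] by simp
qed

text \<open>Since \<open>m\<^sub>k = m\<^sub>k \<xi>\<^sub>\<mu>\<close>, the action relation moves \<open>\<xi>\<^sub>\<mu>\<close> onto \<open>R\<^sub>\<lambda>\<close>, where it acts by zero.\<close>
lemma delta_last_weight_ne:
  assumes v: "valid_tuple n r k (ms, x)" and mu: "mu \<in> compositions n r"
    and "columns_of_weight r (ms ! k) mu" and "mu \<noteq> la"
  shows "delta (ms, x) \<in> relations"
proof -
  have "ms ! k \<in> xi_span n r (Lambda_s n r (if k = 0 then 0 else 1))"
    using valid_tuple_nth[OF v] unfolding factor_eq_xi_span by simp
  then have "mmul n r (ms ! k) (scal_xi n r 1 mu) = ms ! k"
    using mmul_scal_xi_right_columns_of_weight assms(3) mu by blast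
  with tensor_relation_action[OF v mu, of 1] assms(4)
  have "fdiff (delta (ms, x)) (delta (ms, 0)) \<in> relations" by (simp add: act_R_def)
  then show ?thesis using delta_zero_scalar[OF v] by (rule gen_subgroup_cancel)
qed

text \<open>Since \<open>m\<^sub>p = m\<^sub>p \<xi>\<^sub>\<mu>\<close>, balancedness moves \<open>\<xi>\<^sub>\<mu>\<close> into the next factor, whose rows
  are thereby restricted to weight \<open>\<mu>\<close>; as that factor lies in \<open>J\<close>, each of its nonzero column
  components has a weight strictly dominated by \<open>\<mu>\<close>.\<close>
lemma delta_shift_weight:
  assumes v: "valid_tuple n r k (ms, x)" and p: "p < k" and mu: "mu \<in> compositions n r"
    and cols: "columns_of_weight r (ms ! p) mu"
    and next_factor: "\<And>nu ms'. nu \<in> compositions n r \<Longrightarrow> dom_gt n mu nu \<Longrightarrow> valid_tuple n r k (ms', x)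
      \<Longrightarrow> columns_of_weight r (ms' ! Suc p) nu \<Longrightarrow> delta (ms', x) \<in> relations"
  shows "delta (ms, x) \<in> relations"
proof -
  have m: "ms ! p \<in> xi_span n r (Lambda_s n r (if p = 0 then 0 else 1))"
    using valid_tuple_nth[OF v] p unfolding factor_eq_xi_span by simp
  have J: "ms ! Suc p \<in> Jideal n r"
    using valid_tuple_nth[OF v, of "Suc p"] p unfolding factor_def by simp
  define m' where "m' = row_restrict r mu (ms ! Suc p)"
  have m'J: "m' \<in> Jideal n r"
    using J unfolding m'_def Jideal_def by (rule row_restrict_in_xi_span)
  have "fdiff (delta (ms, x)) (delta (ms[Suc p := m'], x)) \<in> relations"
    using tensor_relation_balanced[OF v p mu, of 1]
    by (simp add: mmul_scal_xi_right_columns_of_weight[OF m mu cols]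
        mmul_scal_xi_left_row_restrict[OF J[unfolded Jideal_def] mu] m'_def)
  moreover have "delta (ms[Suc p := m'], x) \<in> relations"
  proof (rule delta_by_column_weights)
    have "m' \<in> factor n r (Suc p)" using m'J by (simp add: factor_def)
    then show "valid_tuple n r k (ms[Suc p := m'], x)"
      using valid_tuple_update[OF v] p by simp
    show "Suc p \<le> k" using p by simp
    fix nu
    let ?g = "col_restrict r nu m'"
    have len: "Suc p < length ms" using v p unfolding valid_tuple_def by simp
    have "?g \<in> factor n r (Suc p)"
      using m'J unfolding factor_def Jideal_def by (simp add: col_restrict_in_xi_span)
    then have v'': "valid_tuple n r k (ms[Suc p := ?g], x)"
      using valid_tuple_update[OF v] p by simp
    show "delta (ms[Suc p := m', Suc p := col_restrict r nu (ms[Suc p := m'] ! Suc p)], x)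
      \<in> relations"
    proof (cases "?g = (\<lambda>i j. 0)")
      case True
      then show ?thesis using delta_zero_factor[OF v, of "Suc p"] p len by simp
    next
      case False
      then have "dom_gt n mu nu" and "nu \<in> compositions n r"
        using Jideal_restrict_nonzero_dom_gt[OF J] col_restrict_nonzero_compositions m'J
        unfolding m'_def Jideal_def by blast+
      then have "delta (ms[Suc p := ?g], x) \<in> relations"
        using next_factor v'' len by (simp add: columns_of_weight_col_restrict)
      then show ?thesis using len by simp
    qed
  qed
  ultimately show ?thesis by (rule gen_subgroup_cancel)
qed

lemma delta_without_dom_chain:
  assumes "p + d = k" and "valid_tuple n r k (ms, x)" and "mu \<in> compositions n r"
    and "columns_of_weight r (ms ! p) mu" and "\<not> dom_chain n r d mu la"
  shows "delta (ms, x) \<in> relations"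
  using assms
proof (induction d arbitrary: p ms mu)
  case 0
  then have "mu \<noteq> la" using dom_chain_refl by blast
  with 0 show ?case using delta_last_weight_ne by simp
next
  case (Suc d)
  show ?case
  proof (rule delta_shift_weight[OF Suc.prems(2) _ Suc.prems(3,4)])
    show "p < k" using Suc.prems(1) by simp
    fix nu ms'
    assume "nu \<in> compositions n r" "dom_gt n mu nu" "valid_tuple n r k (ms', x)"
      "columns_of_weight r (ms' ! Suc p) nu"
    moreover have "\<not> dom_chain n r d nu la"
      using dom_chain_Suc \<open>dom_gt n mu nu\<close> Suc.prems(3,5) by blast
    ultimately show "delta (ms', x) \<in> relations"
      using Suc.IH[of "Suc p"] Suc.prems(1) by simp
  qed
qed

lemma delta_valid_tuple:
  assumes "max_chain_length n r < k" and v: "valid_tuple n r k (ms, x)"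
  shows "delta (ms, x) \<in> relations"
proof (rule delta_by_column_weights[OF v, of 0])
  fix nu
  have len: "0 < length ms" using v unfolding valid_tuple_def by simp
  let ?g = "col_restrict r nu (ms ! 0)"
  have "?g \<in> xi_span n r (Lambda_s n r 0)"
    using valid_tuple_nth[OF v, of 0] unfolding factor_eq_xi_span by (simp add: col_restrict_in_xi_span)
  show "delta (ms[0 := ?g], x) \<in> relations"
  proof (cases "?g = (\<lambda>i j. 0)")
    case True
    then show ?thesis using delta_zero_factor[OF v, of 0] by simp
  next
    case False
    have "valid_tuple n r k (ms[0 := ?g], x)"
      using valid_tuple_update[OF v] \<open>?g \<in> xi_span n r (Lambda_s n r 0)\<close> by (simp add: factor_eq_xi_span)
    moreover have "nu \<in> compositions n r"
      using col_restrict_nonzero_compositions False valid_tuple_nth[OF v, of 0]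
      unfolding factor_eq_xi_span by simp
    moreover have "\<not> dom_chain n r k nu la"
      using dom_chain_le_max_chain_length assms(1) by fastforce
    moreover have "columns_of_weight r (ms[0 := ?g] ! 0) nu"
      using len by (simp add: columns_of_weight_col_restrict)
    ultimately show ?thesis using delta_without_dom_chain[of 0 k, simplified] by blast
  qed
qed simp

end

theorem corollary4p5:
  fixes n r k :: nat and la :: "nat \<Rightarrow> nat"
  assumes "n \<ge> 1" and "r \<ge> 1"
    and "la \<in> compositions n r"
    and "k > max_chain_length n r"
  shows "Bplus_zero TYPE('a::comm_ring_1) n r k la"
proof -
  let ?S = "relations n r k la :: ('a tmat list \<times> 'a \<Rightarrow> int) set"
  let ?F = "gen_subgroup {delta t | t. valid_tuple n r k (t :: 'a tmat list \<times> 'a)}"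
  have "?F \<subseteq> ?S"
    by (rule gen_subgroup_mono_generators) (use delta_valid_tuple[OF assms(4)] in auto)
  then have "Bplus n r k la = (\<lambda>_. ?S) ` ?F"
    unfolding Bplus_def using gen_subgroup_coset by (intro image_cong) auto
  also have "\<dots> = {?S}" using gen_zero by blast
  finally show ?thesis unfolding Bplus_zero_def .
qed

end
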